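(* Let $X$ be a Hausdorff space and $\mathcal{H}$ a subspace with $\mathcal{F}_2(X)\subset\mathcal{H}\subset\mathcal{K}(X)$. Then $\mathcal{H}$ is extremally disconnected if and only if $X$ is discrete.
   Context: $\mathcal{K}(X)$ is the set of nonempty compact subsets of $X$ with the Vietoris topology (generated by $U^+=\{A: A\subset U\}$ and $U^-=\{A: A\cap U\neq\emptyset\}$ for $U$ open in $X$), and $\mathcal{F}_2(X)$ its subspace of nonempty subsets with at most $2$ points. A space is extremally disconnected if the closure of every open set is open. *)

theory Defs
  imports "HOL-Analysis.Analysis"
begin

definition hyperspace_K :: "'a topology \<Rightarrow> 'a set set" where
  "hyperspace_K X = {A. A \<noteq> {} \<and> compactin X A}"

definition hyperspace_F2 :: "'a topology \<Rightarrow> 'a set set" where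
  "hyperspace_F2 X = {A. A \<noteq> {} \<and> A \<subseteq> topspace X \<and> finite A \<and> card A \<le> 2}"

definition vietoris_upper :: "'a topology \<Rightarrow> 'a set \<Rightarrow> 'a set set" where
  "vietoris_upper X U = {A \<in> hyperspace_K X. A \<subseteq> U}"

definition vietoris_lower :: "'a topology \<Rightarrow> 'a set \<Rightarrow> 'a set set" where
  "vietoris_lower X U = {A \<in> hyperspace_K X. A \<inter> U \<noteq> {}}"

definition vietoris :: "'a topology \<Rightarrow> 'a set topology" where
  "vietoris X = topology_generated_by
     ({vietoris_upper X U | U. openin X U} \<union> {vietoris_lower X U | U. openin X U})"

definition extremally_disconnected :: "'a topology \<Rightarrow> bool" where
  "extremally_disconnected T \<longleftrightarrow> (\<forall>U. openin T U \<longrightarrow> openin T (T closure_of U))"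

end

theory Submission
  imports Defs
begin

text \<open>
  If X is discrete, every compact set A is finite and hence isolated in the Vietoris topology,
  being the only element of A^+ \<inter> \<Inter>{{a}^- | a \<in> A}; so the hyperspace is discrete.
  Conversely, let x be a non-isolated point. By Zorn's lemma there is a maximal pairwise
  disjoint family M of open sets whose closures miss x, and by maximality and the Hausdorff
  property x lies in the closure of \<Union>M. The sets contained in one member of M and the sets
  meeting two distinct members of M form disjoint open subsets of H, yet small singletons
  resp. doubletons near x show that {x} is in the closure of both. In an extremally
  disconnected space disjoint open sets have disjoint closures.
\<close>

lemma openin_vietoris_upper: "openin X U \<Longrightarrow> openin (vietoris X) (vietoris_upper X U)"
  unfolding vietoris_def openin_topology_generated_by_iff
  by (rule generate_topology_on.Basis) blast

lemma openin_vietoris_lower: "openin X U \<Longrightarrow> openin (vietoris X) (vietoris_lower X U)"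
  unfolding vietoris_def openin_topology_generated_by_iff
  by (rule generate_topology_on.Basis) blast

lemma topspace_vietoris: "topspace (vietoris X) = hyperspace_K X"
proof -
  have "vietoris_upper X (topspace X) = hyperspace_K X"
    by (auto simp: vietoris_upper_def hyperspace_K_def dest: compactin_subset_topspace)
  then show ?thesis
    unfolding vietoris_def topology_generated_by_topspace
    by (auto simp: vietoris_upper_def vietoris_lower_def)
qed

lemma vietoris_upper_subset_nbhd_of_singleton:
  assumes "openin (vietoris X) W" "{x} \<in> W"
  obtains U where "openin X U" "x \<in> U" "vietoris_upper X U \<subseteq> W"
proof -
  let ?S = "{vietoris_upper X U | U. openin X U} \<union> {vietoris_lower X U | U. openin X U}"
  have "generate_topology_on ?S W"
    using assms(1) by (simp add: vietoris_def openin_topology_generated_by_iff)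
  then have "\<exists>U. openin X U \<and> x \<in> U \<and> vietoris_upper X U \<subseteq> W"
    using assms(2)
  proof (induction arbitrary: x rule: generate_topology_on.induct)
    case Empty
    then show ?case by simp
  next
    case (Int a b)
    then have "{x} \<in> a" "{x} \<in> b" by auto
    then obtain U1 U2 where "openin X U1" "x \<in> U1" "vietoris_upper X U1 \<subseteq> a"
        "openin X U2" "x \<in> U2" "vietoris_upper X U2 \<subseteq> b"
      using Int.IH by meson
    then show ?case
      by (intro exI[of _ "U1 \<inter> U2"]) (auto simp: vietoris_upper_def)
  next
    case (UN K)
    then obtain k where "k \<in> K" "{x} \<in> k" by auto
    with UN.IH show ?case by (meson UnionI subset_iff)
  next
    case (Basis s)
    then obtain U where "openin X U" "s = vietoris_upper X U \<or> s = vietoris_lower X U"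
      by auto
    with Basis.prems show ?case
      by (auto simp: vietoris_upper_def vietoris_lower_def hyperspace_K_def)
  qed
  with that show thesis by blast
qed

lemma singleton_in_closure_of_vietoris:
  assumes "H \<subseteq> hyperspace_K X" "{x} \<in> H" "\<O> \<subseteq> H"
    and "\<And>U. openin X U \<Longrightarrow> x \<in> U \<Longrightarrow> \<exists>A\<in>\<O>. A \<subseteq> U"
  shows "{x} \<in> subtopology (vietoris X) H closure_of \<O>"
  unfolding in_closure_of
proof (intro conjI allI impI)
  show "{x} \<in> topspace (subtopology (vietoris X) H)"
    using assms(1,2) by (auto simp: topspace_vietoris)
  fix T
  assume "{x} \<in> T \<and> openin (subtopology (vietoris X) H) T"
  then obtain W where W: "openin (vietoris X) W" "T = W \<inter> H" "{x} \<in> W"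
    by (auto simp: openin_subtopology)
  obtain U where U: "openin X U" "x \<in> U" "vietoris_upper X U \<subseteq> W"
    using vietoris_upper_subset_nbhd_of_singleton[OF W(1,3)] by blast
  then obtain A where "A \<in> \<O>" "A \<subseteq> U"
    using assms(4) by blast
  with assms(1,3) U(3) W(2) show "\<exists>A. A \<in> \<O> \<and> A \<in> T"
    by (auto simp: vietoris_upper_def)
qed

lemma openin_vietoris_finite_singleton:
  assumes "A \<in> hyperspace_K X" "finite A" "\<And>a. a \<in> A \<Longrightarrow> openin X {a}"
  shows "openin (vietoris X) {A}"
proof -
  have "A \<noteq> {}"
    using assms(1) by (simp add: hyperspace_K_def)
  have "openin X A"
    using openin_Union[of "(\<lambda>a. {a}) ` A" X] assms(3) by auto
  then have "openin (vietoris X) (vietoris_upper X A \<inter> (\<Inter>a\<in>A. vietoris_lower X {a}))"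
    using \<open>A \<noteq> {}\<close> assms(2,3)
    by (intro openin_Int openin_Inter openin_vietoris_upper) (auto intro: openin_vietoris_lower)
  moreover have "vietoris_upper X A \<inter> (\<Inter>a\<in>A. vietoris_lower X {a}) = {A}"
    using assms(1) by (auto simp: vietoris_upper_def vietoris_lower_def)
  ultimately show ?thesis
    by simp
qed

lemma vietoris_discrete_topology:
  "vietoris (discrete_topology U) = discrete_topology (hyperspace_K (discrete_topology U))"
proof -
  have "discrete_topology (hyperspace_K (discrete_topology U)) = vietoris (discrete_topology U)"
    unfolding discrete_topology_unique
    by (auto simp: topspace_vietoris hyperspace_K_def compactin_discrete_topology
             intro!: openin_vietoris_finite_singleton)
  then show ?thesis by simp
qed

lemma extremally_disconnected_discrete_topology: "extremally_disconnected (discrete_topology U)"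
  by (simp add: extremally_disconnected_def discrete_topology_closure_of)

lemma extremally_disconnected_disjoint_closures:
  assumes "extremally_disconnected T" "openin T U" "openin T V" "U \<inter> V = {}"
  shows "T closure_of U \<inter> T closure_of V = {}"
proof -
  have "openin T (T closure_of U)"
    using assms(1,2) by (simp add: extremally_disconnected_def)
  moreover have "T closure_of U \<inter> V = {}"
    using openin_Int_closure_of_eq_empty[OF assms(3)] assms(4) by blast
  ultimately show ?thesis
    by (simp add: openin_Int_closure_of_eq_empty)
qed

lemma doubleton_in_hyperspace_F2:
  "a \<in> topspace X \<Longrightarrow> b \<in> topspace X \<Longrightarrow> {a, b} \<in> hyperspace_F2 X"
  by (simp add: hyperspace_F2_def card_insert_if)

lemma exists_maximal_pairwise_subset:
  obtains M where "M \<subseteq> S" "pairwise R M"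
    "\<And>N. M \<subseteq> N \<Longrightarrow> N \<subseteq> S \<Longrightarrow> pairwise R N \<Longrightarrow> N = M"
proof -
  let ?\<A> = "{M. M \<subseteq> S \<and> pairwise R M}"
  have "\<exists>M\<in>?\<A>. \<forall>N\<in>?\<A>. M \<subseteq> N \<longrightarrow> N = M"
  proof (rule subset_Zorn')
    fix C
    assume chain: "subset.chain ?\<A> C"
    then have "C \<subseteq> ?\<A>"
      by (simp add: subset_chain_def)
    moreover have "pairwise R (\<Union>C)"
    proof (rule pairwise_chain_Union)
      show "chain\<^sub>\<subseteq> C"
        using chain by (simp add: subset_chain_def chain_subset_def)
    qed (use \<open>C \<subseteq> ?\<A>\<close> in blast)
    ultimately show "\<Union>C \<in> ?\<A>"
      by blast
  qed
  then obtain M where M: "M \<in> ?\<A>" and maximal: "\<forall>N\<in>?\<A>. M \<subseteq> N \<longrightarrow> N = M"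
    by blast
  show thesis
  proof (rule that)
    show "M \<subseteq> S" "pairwise R M"
      using M by simp_all
    show "N = M" if "M \<subseteq> N" "N \<subseteq> S" "pairwise R N" for N
      using maximal that by simp
  qed
qed

lemma Hausdorff_space_disjoint_open_family_accumulating:
  assumes "Hausdorff_space X" "x \<in> topspace X" "\<not> openin X {x}"
  obtains M where "pairwise disjnt M" "\<And>P. P \<in> M \<Longrightarrow> openin X P"
    "\<And>P. P \<in> M \<Longrightarrow> x \<notin> X closure_of P" "x \<in> X closure_of \<Union>M"
proof (rule exists_maximal_pairwise_subset[of "{P. openin X P \<and> x \<notin> X closure_of P}" disjnt])
  fix M
  assume M: "M \<subseteq> {P. openin X P \<and> x \<notin> X closure_of P}" "pairwise disjnt M"
    and maximal: "\<And>N. M \<subseteq> N \<Longrightarrow> N \<subseteq> {P. openin X P \<and> x \<notin> X closure_of P}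
                      \<Longrightarrow> pairwise disjnt N \<Longrightarrow> N = M"
  have "x \<in> X closure_of \<Union>M"
  proof (rule ccontr)
    assume "x \<notin> X closure_of \<Union>M"
    then obtain U where U: "openin X U" "x \<in> U" "U \<inter> \<Union>M = {}"
      using assms(2) by (auto simp: in_closure_of)
    have "U \<noteq> {x}"
      using U(1) assms(3) by blast
    then obtain y where y: "y \<in> U" "y \<noteq> x"
      using U(2) by blast
    then have "y \<in> topspace X"
      using U(1) openin_subset by blast
    then have "\<exists>Vx Vy. openin X Vx \<and> openin X Vy \<and> x \<in> Vx \<and> y \<in> Vy \<and> disjnt Vx Vy"
      using assms(1,2) y(2) unfolding Hausdorff_space_def by blast
    then obtain Vx Vy where V: "openin X Vx" "openin X Vy" "x \<in> Vx" "y \<in> Vy" "disjnt Vx Vy"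
      by blast
    define P where "P = Vy \<inter> U"
    have "openin X P"
      using U(1) V(2) by (simp add: P_def openin_Int)
    moreover have "x \<notin> X closure_of P"
      using V(1,3,5) by (auto simp: in_closure_of P_def disjnt_def)
    moreover have "disjnt P Q" if "Q \<in> M" for Q
      using U(3) that by (auto simp: P_def disjnt_def)
    ultimately have "insert P M = M"
      using M by (intro maximal) (auto simp: pairwise_insert disjnt_sym)
    then show False
      using U(3) V(4) y(1) by (auto simp: P_def)
  qed
  with M show thesis
    by (intro that) auto
qed

lemma singleton_in_closure_of_vietoris_upper_family:
  assumes "hyperspace_F2 X \<subseteq> H" "H \<subseteq> hyperspace_K X" "x \<in> X closure_of \<Union>M"
  shows "{x} \<in> subtopology (vietoris X) H closure_of (H \<inter> (\<Union>P\<in>M. vietoris_upper X P))"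
proof (rule singleton_in_closure_of_vietoris)
  have singleton_in_H: "{a} \<in> H" if "a \<in> topspace X" for a
    using assms(1) doubleton_in_hyperspace_F2[OF that that] by auto
  show "{x} \<in> H"
    using assms(3) by (simp add: in_closure_of singleton_in_H)
  fix U
  assume "openin X U" "x \<in> U"
  then obtain a P where a: "a \<in> U" "P \<in> M" "a \<in> P"
    using assms(3)[unfolded in_closure_of] by blast
  have "{a} \<in> H"
    using singleton_in_H \<open>openin X U\<close> \<open>a \<in> U\<close> openin_subset by blast
  then have "{a} \<in> H \<inter> (\<Union>P\<in>M. vietoris_upper X P)"
    using assms(2) a(2,3) by (auto simp: vietoris_upper_def)
  with a(1) show "\<exists>A\<in>H \<inter> (\<Union>P\<in>M. vietoris_upper X P). A \<subseteq> U"
    by blast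
qed (use assms(2) in auto)

lemma singleton_in_closure_of_vietoris_lower_pairs:
  assumes "hyperspace_F2 X \<subseteq> H" "H \<subseteq> hyperspace_K X" "x \<in> X closure_of \<Union>M"
    and "\<And>P. P \<in> M \<Longrightarrow> x \<notin> X closure_of P"
  shows "{x} \<in> subtopology (vietoris X) H closure_of
           (H \<inter> (\<Union>P\<in>M. \<Union>Q\<in>M - {P}. vietoris_lower X P \<inter> vietoris_lower X Q))"
proof (rule singleton_in_closure_of_vietoris)
  have doubleton_in_H: "{a, b} \<in> H" if "a \<in> topspace X" "b \<in> topspace X" for a b
    using assms(1) doubleton_in_hyperspace_F2[OF that] by auto
  show "{x} \<in> H"
    using assms(3) doubleton_in_H[of x x] by (simp add: in_closure_of)
  fix U
  assume U: "openin X U" "x \<in> U"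
  then obtain a P where a: "a \<in> U" "P \<in> M" "a \<in> P"
    using assms(3)[unfolded in_closure_of] by blast
  have "openin X (U - X closure_of P)" "x \<in> U - X closure_of P"
    using U assms(4)[OF \<open>P \<in> M\<close>] by (auto simp: openin_diff)
  then obtain b Q where b: "b \<in> U" "b \<notin> X closure_of P" "Q \<in> M" "b \<in> Q"
    using assms(3)[unfolded in_closure_of] by blast
  have "Q \<noteq> P"
    using b(1,2,4) closure_of_subset_Int[of X P] openin_subset[OF U(1)] by blast
  have "{a, b} \<in> H"
    using doubleton_in_H U(1) a(1) b(1) openin_subset by blast
  moreover have "{a, b} \<in> vietoris_lower X P \<inter> vietoris_lower X Q"
    using \<open>{a, b} \<in> H\<close> assms(2) a(3) b(4) by (auto simp: vietoris_lower_def)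
  ultimately have "{a, b} \<in> H \<inter> (\<Union>P\<in>M. \<Union>Q\<in>M - {P}. vietoris_lower X P \<inter> vietoris_lower X Q)"
    using a(2) b(3) \<open>Q \<noteq> P\<close> by blast
  moreover have "{a, b} \<subseteq> U"
    using a(1) b(1) by blast
  ultimately show "\<exists>A\<in>H \<inter> (\<Union>P\<in>M. \<Union>Q\<in>M - {P}. vietoris_lower X P \<inter> vietoris_lower X Q). A \<subseteq> U"
    by blast
qed (use assms(2) in auto)

lemma non_isolated_point_imp_not_extremally_disconnected_hyperspace:
  assumes "Hausdorff_space X" "hyperspace_F2 X \<subseteq> H" "H \<subseteq> hyperspace_K X"
    and "x \<in> topspace X" "\<not> openin X {x}"
  shows "\<not> extremally_disconnected (subtopology (vietoris X) H)"
proof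
  assume ED: "extremally_disconnected (subtopology (vietoris X) H)"
  obtain M where M: "pairwise disjnt M" "\<And>P. P \<in> M \<Longrightarrow> openin X P"
      "\<And>P. P \<in> M \<Longrightarrow> x \<notin> X closure_of P" "x \<in> X closure_of \<Union>M"
    using Hausdorff_space_disjoint_open_family_accumulating[OF assms(1,4,5)] by blast
  define within_one where "within_one = H \<inter> (\<Union>P\<in>M. vietoris_upper X P)"
  define meets_two where
    "meets_two = H \<inter> (\<Union>P\<in>M. \<Union>Q\<in>M - {P}. vietoris_lower X P \<inter> vietoris_lower X Q)"
  have "openin (subtopology (vietoris X) H) within_one"
    unfolding within_one_def using M(2)
    by (intro openin_subtopology_Int2 openin_Union) (auto intro: openin_vietoris_upper)
  moreover have "openin (subtopology (vietoris X) H) meets_two"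
  proof -
    have "openin (vietoris X) (vietoris_lower X P \<inter> vietoris_lower X Q)" if "P \<in> M" "Q \<in> M" for P Q
      using M(2) that by (simp add: openin_Int openin_vietoris_lower)
    then show ?thesis
      unfolding meets_two_def
      by (intro openin_subtopology_Int2 openin_Union) blast
  qed
  moreover have "within_one \<inter> meets_two = {}"
  proof (rule equals0I)
    fix A
    assume "A \<in> within_one \<inter> meets_two"
    then obtain P P' Q where "P \<in> M" "A \<subseteq> P" "P' \<in> M" "Q \<in> M" "P' \<noteq> Q"
        "A \<inter> P' \<noteq> {}" "A \<inter> Q \<noteq> {}"
      by (auto simp: within_one_def meets_two_def vietoris_upper_def vietoris_lower_def)
    with M(1) have "P' = P" "Q = P"
      unfolding pairwise_def disjnt_def by blast+
    with \<open>P' \<noteq> Q\<close> show False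
      by simp
  qed
  moreover have "{x} \<in> subtopology (vietoris X) H closure_of within_one"
    unfolding within_one_def using assms(2,3) M(4)
    by (rule singleton_in_closure_of_vietoris_upper_family)
  moreover have "{x} \<in> subtopology (vietoris X) H closure_of meets_two"
    unfolding meets_two_def using assms(2,3) M(4,3)
    by (rule singleton_in_closure_of_vietoris_lower_pairs)
  ultimately show False
    using extremally_disconnected_disjoint_closures[OF ED] by blast
qed

theorem proposition3p3:
  fixes X :: "'a topology" and H :: "'a set set"
  assumes "Hausdorff_space X"
    and "hyperspace_F2 X \<subseteq> H" and "H \<subseteq> hyperspace_K X"
  shows "extremally_disconnected (subtopology (vietoris X) H)
           \<longleftrightarrow> X = discrete_topology (topspace X)"
proof
  assume "extremally_disconnected (subtopology (vietoris X) H)"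
  then have "openin X {x}" if "x \<in> topspace X" for x
    using non_isolated_point_imp_not_extremally_disconnected_hyperspace[OF assms that] by blast
  then have "discrete_topology (topspace X) = X"
    unfolding discrete_topology_unique by blast
  then show "X = discrete_topology (topspace X)"
    by (rule sym)
next
  assume discrete: "X = discrete_topology (topspace X)"
  have "vietoris X = discrete_topology (hyperspace_K X)"
    using vietoris_discrete_topology[of "topspace X"] unfolding discrete[symmetric] .
  with assms(3) have "subtopology (vietoris X) H = discrete_topology H"
    by (simp add: Int_absorb1)
  then show "extremally_disconnected (subtopology (vietoris X) H)"
    by (simp add: extremally_disconnected_discrete_topology)
qed

end
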